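(* Let $B$ be a ring and $M$ a left $B$-module with endomorphism ring $S={}_B\mathrm{End}(M)$. If $M$ is a generator of $\sigma[M]$, then $M$ is a formally smooth $B$-$S$ bimodule.
   Context: Left $B$-linear maps are written on the right of arguments, so $S$ acts on $M$ on the right. For a $B$-$A$ bimodule $M$: ${}^*M={}_B\mathrm{Hom}(M,B)$ is an $A$-$B$ bimodule via $(m)(afb)=((ma)f)b$; $\mathrm{ev}_M:M\otimes_A{}^*M\to B$, $m\otimes f\mapsto(m)f$; $\mathcal{E}_{M,B}$ is the class of $B$-bimodule maps $f:Y\to Y'$ such that ${}_B\mathrm{Hom}(M,f)$ has a right inverse as an $A$-$B$ bimodule map; a $B$-bimodule $P$ is $\mathcal{E}_{M,B}$-projective if for every $f:Y\to Y'$ in $\mathcal{E}_{M,B}$ every $B$-bimodule map $P\to Y'$ factors through $f$; $M$ is a formally smooth bimodule if $\mathrm{Ker}(\mathrm{ev}_M)$ is $\mathcal{E}_{M,B}$-projective. $\sigma[M]$ is the full subcategory of left $B$-modules subgenerated by $M$ (isomorphic to submodules of quotients of direct sums of copies of $M$); $M$ generates $\sigma[M]$ if every module in $\sigma[M]$ is a quotient of a direct sum of copies of $M$. *)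

theory Defs
  imports Main "HOL-Library.Function_Algebras"
begin

(* Left B-linear maps are ordinary HOL functions; following the paper they are
   "written on the right", i.e. (m)s is s m, so S = End_B(M) acts on the right
   of M and composition in S is reversed.  *)

definition lmod :: "('b::ring_1 \<Rightarrow> 'm::ab_group_add \<Rightarrow> 'm) \<Rightarrow> bool" where
  "lmod sm \<longleftrightarrow> (\<forall>b x y. sm b (x + y) = sm b x + sm b y) \<and>
                (\<forall>a b x. sm (a + b) x = sm a x + sm b x) \<and>
                (\<forall>a b x. sm (a * b) x = sm a (sm b x)) \<and>
                (\<forall>x. sm 1 x = x)"

definition rmod :: "('y::ab_group_add \<Rightarrow> 'b::ring_1 \<Rightarrow> 'y) \<Rightarrow> bool" where
  "rmod rm \<longleftrightarrow> (\<forall>b x y. rm (x + y) b = rm x b + rm y b) \<and>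
                (\<forall>a b x. rm x (a + b) = rm x a + rm x b) \<and>
                (\<forall>a b x. rm x (a * b) = rm (rm x a) b) \<and>
                (\<forall>x. rm x 1 = x)"

definition bimod :: "('b::ring_1 \<Rightarrow> 'y::ab_group_add \<Rightarrow> 'y) \<Rightarrow> ('y \<Rightarrow> 'b \<Rightarrow> 'y) \<Rightarrow> bool" where
  "bimod l r \<longleftrightarrow> lmod l \<and> rmod r \<and> (\<forall>a b y. r (l a y) b = l a (r y b))"

definition blin :: "('b::ring_1 \<Rightarrow> 'x::ab_group_add \<Rightarrow> 'x) \<Rightarrow> ('b \<Rightarrow> 'y::ab_group_add \<Rightarrow> 'y)
                     \<Rightarrow> ('x \<Rightarrow> 'y) \<Rightarrow> bool" where
  "blin smX smY f \<longleftrightarrow> (\<forall>x y. f (x + y) = f x + f y) \<and> (\<forall>b x. f (smX b x) = smY b (f x))"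

definition bimap :: "('b::ring_1 \<Rightarrow> 'x::ab_group_add \<Rightarrow> 'x) \<Rightarrow> ('x \<Rightarrow> 'b \<Rightarrow> 'x)
     \<Rightarrow> ('b \<Rightarrow> 'y::ab_group_add \<Rightarrow> 'y) \<Rightarrow> ('y \<Rightarrow> 'b \<Rightarrow> 'y) \<Rightarrow> ('x \<Rightarrow> 'y) \<Rightarrow> bool" where
  "bimap lX rX lY rY f \<longleftrightarrow> (\<forall>x y. f (x + y) = f x + f y) \<and>
      (\<forall>b x. f (lX b x) = lY b (f x)) \<and> (\<forall>b x. f (rX x b) = rY (f x) b)"

definition EndB :: "('b::ring_1 \<Rightarrow> 'm::ab_group_add \<Rightarrow> 'm) \<Rightarrow> ('m \<Rightarrow> 'm) set" where
  "EndB sm = {s. blin sm sm s}"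

definition dualM :: "('b::ring_1 \<Rightarrow> 'm::ab_group_add \<Rightarrow> 'm) \<Rightarrow> ('m \<Rightarrow> 'b) set" where
  "dualM sm = {f. blin sm (\<lambda>b c. b * c) f}"

text \<open>The A-B bimodule structure on *M (A = S):  (m)(a f b) = ((m a) f) b,
  i.e.  a f b = (\<lambda>m. f (a m) * b).\<close>

text \<open>The tensor product M \<otimes>_S *M, presented as the free abelian group on
  M \<times> *M (finitely supported integer-valued functions) modulo the subgroup
  generated by the bilinearity and S-balancedness relations
  (m a) \<otimes> f = m \<otimes> (a f).\<close>
definition fsupp :: "('a \<Rightarrow> int) \<Rightarrow> 'a set" where
  "fsupp c = {p. c p \<noteq> 0}"

definition delta :: "'a \<Rightarrow> 'a \<Rightarrow> int" where
  "delta p = (\<lambda>q. if q = p then 1 else 0)"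

definition freeT :: "('b::ring_1 \<Rightarrow> 'm::ab_group_add \<Rightarrow> 'm) \<Rightarrow> (('m \<times> ('m \<Rightarrow> 'b)) \<Rightarrow> int) set" where
  "freeT sm = {c. finite (fsupp c) \<and> (\<forall>p\<in>fsupp c. snd p \<in> dualM sm)}"

definition relgens :: "('b::ring_1 \<Rightarrow> 'm::ab_group_add \<Rightarrow> 'm) \<Rightarrow> (('m \<times> ('m \<Rightarrow> 'b)) \<Rightarrow> int) set" where
  "relgens sm =
     {delta (x + y, f) - delta (x, f) - delta (y, f) | x y f. f \<in> dualM sm} \<union>
     {delta (x, f + g) - delta (x, f) - delta (x, g) | x f g. f \<in> dualM sm \<and> g \<in> dualM sm} \<union>
     {delta (s x, f) - delta (x, f \<circ> s) | x f s. f \<in> dualM sm \<and> s \<in> EndB sm}"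

definition relsub :: "('b::ring_1 \<Rightarrow> 'm::ab_group_add \<Rightarrow> 'm) \<Rightarrow> (('m \<times> ('m \<Rightarrow> 'b)) \<Rightarrow> int) set" where
  "relsub sm = {c. \<exists>gs :: (int \<times> (('m \<times> ('m \<Rightarrow> 'b)) \<Rightarrow> int)) list.
                   set (map snd gs) \<subseteq> relgens sm \<and> c = (\<lambda>p. \<Sum>(k, g)\<leftarrow>gs. k * g p)}"

text \<open>B-bimodule structure on formal sums: b (m \<otimes> f) b' = (b m) \<otimes> (f b').\<close>
definition tlact :: "('b::ring_1 \<Rightarrow> 'm::ab_group_add \<Rightarrow> 'm) \<Rightarrow> 'b
                      \<Rightarrow> (('m \<times> ('m \<Rightarrow> 'b)) \<Rightarrow> int) \<Rightarrow> (('m \<times> ('m \<Rightarrow> 'b)) \<Rightarrow> int)" where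
  "tlact sm b c = (\<lambda>q. \<Sum>p\<in>{p\<in>fsupp c. (sm b (fst p), snd p) = q}. c p)"

definition tract :: "(('m \<times> ('m \<Rightarrow> 'b::ring_1)) \<Rightarrow> int) \<Rightarrow> 'b \<Rightarrow> (('m \<times> ('m \<Rightarrow> 'b)) \<Rightarrow> int)" where
  "tract c b = (\<lambda>q. \<Sum>p\<in>{p\<in>fsupp c. (fst p, \<lambda>x. snd p x * b) = q}. c p)"

text \<open>ev_M : M \<otimes>_S *M \<rightarrow> B,  m \<otimes> f \<mapsto> (m)f  (on representatives; it vanishes on relsub).\<close>
definition evM :: "(('m \<times> ('m \<Rightarrow> 'b::ring_1)) \<Rightarrow> int) \<Rightarrow> 'b" where
  "evM c = (\<Sum>p\<in>fsupp c. of_int (c p) * snd p (fst p))"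

text \<open>Representatives of Ker(ev_M); Ker(ev_M) itself is kerev / relsub.\<close>
definition kerev :: "('b::ring_1 \<Rightarrow> 'm::ab_group_add \<Rightarrow> 'm) \<Rightarrow> (('m \<times> ('m \<Rightarrow> 'b)) \<Rightarrow> int) set" where
  "kerev sm = {c \<in> freeT sm. evM c = 0}"

definition kermap :: "('b::ring_1 \<Rightarrow> 'm::ab_group_add \<Rightarrow> 'm)
     \<Rightarrow> ('b \<Rightarrow> 'y::ab_group_add \<Rightarrow> 'y) \<Rightarrow> ('y \<Rightarrow> 'b \<Rightarrow> 'y)
     \<Rightarrow> ((('m \<times> ('m \<Rightarrow> 'b)) \<Rightarrow> int) \<Rightarrow> 'y) \<Rightarrow> bool" where
  "kermap sm lY rY p \<longleftrightarrow>
     (\<forall>c\<in>relsub sm. p c = 0) \<and>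
     (\<forall>c\<in>kerev sm. \<forall>d\<in>kerev sm. p (c + d) = p c + p d) \<and>
     (\<forall>b. \<forall>c\<in>kerev sm. p (tlact sm b c) = lY b (p c)) \<and>
     (\<forall>b. \<forall>c\<in>kerev sm. p (tract c b) = rY (p c) b)"

text \<open>The class E_{M,B}: B-bimodule maps f : Y \<rightarrow> Y' such that
  Hom_B(M,f) : Hom_B(M,Y) \<rightarrow> Hom_B(M,Y'), g \<mapsto> f \<circ> g, has a right inverse
  which is an A-B bimodule map.  The A-B structure on Hom_B(M,Y) is
  (m)(a g b) = ((m a) g) b, i.e. a g b = (\<lambda>m. rY (g (a m)) b).\<close>
definition E_class :: "('b::ring_1 \<Rightarrow> 'm::ab_group_add \<Rightarrow> 'm)
     \<Rightarrow> ('b \<Rightarrow> 'y::ab_group_add \<Rightarrow> 'y) \<Rightarrow> ('y \<Rightarrow> 'b \<Rightarrow> 'y)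
     \<Rightarrow> ('b \<Rightarrow> 'z::ab_group_add \<Rightarrow> 'z) \<Rightarrow> ('z \<Rightarrow> 'b \<Rightarrow> 'z) \<Rightarrow> ('y \<Rightarrow> 'z) \<Rightarrow> bool" where
  "E_class sm lY rY lZ rZ f \<longleftrightarrow> bimap lY rY lZ rZ f \<and>
     (\<exists>r :: ('m \<Rightarrow> 'z) \<Rightarrow> ('m \<Rightarrow> 'y).
        (\<forall>h. blin sm lZ h \<longrightarrow> blin sm lY (r h)) \<and>
        (\<forall>h h'. blin sm lZ h \<longrightarrow> blin sm lZ h' \<longrightarrow> r (h + h') = r h + r h') \<and>
        (\<forall>h a. blin sm lZ h \<longrightarrow> a \<in> EndB sm \<longrightarrow> r (h \<circ> a) = r h \<circ> a) \<and>
        (\<forall>h b. blin sm lZ h \<longrightarrow> r (\<lambda>m. rZ (h m) b) = (\<lambda>m. rY (r h m) b)) \<and>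
        (\<forall>h. blin sm lZ h \<longrightarrow> f \<circ> r h = h))"

text \<open>M is a formally smooth B-S bimodule: Ker(ev_M) is E_{M,B}-projective.
  The B-bimodules Y, Y' range over arbitrary types 'y, 'z (type variables are
  universally quantified at the level of the theorem).\<close>
definition formally_smooth :: "('b::ring_1 \<Rightarrow> 'm::ab_group_add \<Rightarrow> 'm)
     \<Rightarrow> ('b \<Rightarrow> 'y::ab_group_add \<Rightarrow> 'y) \<Rightarrow> ('y \<Rightarrow> 'b \<Rightarrow> 'y)
     \<Rightarrow> ('b \<Rightarrow> 'z::ab_group_add \<Rightarrow> 'z) \<Rightarrow> ('z \<Rightarrow> 'b \<Rightarrow> 'z) \<Rightarrow> bool" where
  "formally_smooth sm lY rY lZ rZ \<longleftrightarrow>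
     (\<forall>f p. bimod lY rY \<longrightarrow> bimod lZ rZ \<longrightarrow> E_class sm lY rY lZ rZ f \<longrightarrow> kermap sm lZ rZ p \<longrightarrow>
        (\<exists>q. kermap sm lY rY q \<and> (\<forall>c\<in>kerev sm. f (q c) = p c)))"

text \<open>sigma[M]: modules U/K with K \<subseteq> U \<subseteq> M^(\<nat>) submodules (subquotients of
  direct sums of copies of M).  M generates U/K iff U/K is the sum of the images of
  all B-linear maps M \<rightarrow> U/K; such maps are given by lifts h : M \<rightarrow> U that are
  linear modulo K.\<close>
definition dsumM :: "(nat \<Rightarrow> 'm::ab_group_add) set" where
  "dsumM = {v. finite {i. v i \<noteq> 0}}"

definition vsm :: "('b \<Rightarrow> 'm \<Rightarrow> 'm) \<Rightarrow> 'b \<Rightarrow> (nat \<Rightarrow> 'm) \<Rightarrow> (nat \<Rightarrow> 'm)" where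
  "vsm sm b v = (\<lambda>i. sm b (v i))"

definition dsubmod :: "('b::ring_1 \<Rightarrow> 'm::ab_group_add \<Rightarrow> 'm) \<Rightarrow> (nat \<Rightarrow> 'm) set \<Rightarrow> bool" where
  "dsubmod sm U \<longleftrightarrow> U \<subseteq> dsumM \<and> 0 \<in> U \<and>
     (\<forall>u\<in>U. \<forall>v\<in>U. u + v \<in> U) \<and> (\<forall>b. \<forall>u\<in>U. vsm sm b u \<in> U)"

definition homq :: "('b::ring_1 \<Rightarrow> 'm::ab_group_add \<Rightarrow> 'm) \<Rightarrow> (nat \<Rightarrow> 'm) set \<Rightarrow> (nat \<Rightarrow> 'm) set
                     \<Rightarrow> ('m \<Rightarrow> (nat \<Rightarrow> 'm)) \<Rightarrow> bool" where
  "homq sm U K h \<longleftrightarrow> (\<forall>x. h x \<in> U) \<and> (\<forall>x y. h (x + y) - h x - h y \<in> K) \<and>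
                     (\<forall>b x. h (sm b x) - vsm sm b (h x) \<in> K)"

definition generates_sigma :: "('b::ring_1 \<Rightarrow> 'm::ab_group_add \<Rightarrow> 'm) \<Rightarrow> bool" where
  "generates_sigma sm \<longleftrightarrow>
     (\<forall>U K. dsubmod sm U \<longrightarrow> dsubmod sm K \<longrightarrow> K \<subseteq> U \<longrightarrow>
        (\<forall>u\<in>U. \<exists>hs :: (('m \<Rightarrow> (nat \<Rightarrow> 'm)) \<times> 'm) list.
            (\<forall>(h, x)\<in>set hs. homq sm U K h) \<and> u - (\<Sum>(h, x)\<leftarrow>hs. h x) \<in> K))"

end

theory Submission
  imports Defs
begin

text \<open>
  Elements of \<open>M \<otimes>\<^sub>S *M\<close> are finitely supported integer combinations of pairs
  \<open>(m, \<phi>)\<close> modulo the subgroup \<open>N\<close> (\<open>relsub\<close>) of bilinearity and balancing relations.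
  Let \<open>f : Y \<rightarrow> Z\<close> be in \<open>\<E>\<^bsub>M,B\<^esub>\<close>, let \<open>r\<close> be an \<open>S\<close>-\<open>B\<close>-bilinear right inverse
  of \<open>Hom\<^sub>B(M, f)\<close>, and let \<open>p\<close> be a bimodule map on \<open>Ker(ev\<^sub>M)\<close>. If
  \<open>c \<equiv> \<Sum>\<^sub>i g\<^sub>i(x\<^sub>i) mod N\<close> with \<open>B\<close>-linear \<open>g\<^sub>i : M \<rightarrow> Ker(ev\<^sub>M)\<close>, the lift of \<open>p\<close>
  is \<open>q(c) = \<Sum>\<^sub>i r(p \<circ> g\<^sub>i)(x\<^sub>i)\<close>; then \<open>f \<circ> q = p\<close> because \<open>r\<close> is a section.

  Both the existence of such representations and the independence of \<open>q(c)\<close> from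
  the choice come from \<open>M\<close> generating \<open>\<sigma>[M]\<close>. If \<open>c = \<Sum>\<^sub>i k\<^sub>i (m\<^sub>i \<otimes> \<phi>\<^sub>i)\<close>, the
  vector \<open>(m\<^sub>i)\<close> lies in the submodule \<open>{z \<in> M\<^sup>n. \<Sum>\<^sub>i k\<^sub>i \<phi>\<^sub>i(z\<^sub>i) = 0}\<close>, so it is a
  sum of values \<open>h\<^sub>l(w\<^sub>l)\<close> of \<open>B\<close>-linear maps \<open>h\<^sub>l\<close> from \<open>M\<close> into that submodule, and
  \<open>g\<^sub>l(y) = \<Sum>\<^sub>i k\<^sub>i (h\<^sub>l(y)\<^sub>i \<otimes> \<phi>\<^sub>i)\<close> represents \<open>c\<close>. If \<open>\<Sum>\<^sub>j g\<^sub>j(x\<^sub>j) \<in> N\<close>, decompose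
  \<open>x = \<Sum>\<^sub>l h\<^sub>l(w\<^sub>l)\<close> in the same way with \<open>h\<^sub>l\<close> mapping into \<open>{z. \<Sum>\<^sub>j g\<^sub>j(z\<^sub>j) \<in> N}\<close>;
  the components \<open>a\<^sub>j\<^sub>l\<close> of \<open>h\<^sub>l\<close> lie in \<open>S\<close>, so the \<open>S\<close>-linearity of \<open>r\<close> gives
  \<open>\<Sum>\<^sub>j r(p \<circ> g\<^sub>j)(x\<^sub>j) = \<Sum>\<^sub>l r(\<Sum>\<^sub>j p \<circ> g\<^sub>j \<circ> a\<^sub>j\<^sub>l)(w\<^sub>l) = 0\<close>.
\<close>

lemma sum_additive_on:
  fixes h :: "'a::ab_group_add \<Rightarrow> 'c::ab_group_add"
  assumes add: "\<And>x y. x \<in> S \<Longrightarrow> y \<in> S \<Longrightarrow> h (x + y) = h x + h y"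
    and closed: "0 \<in> S" "\<And>x y. x \<in> S \<Longrightarrow> y \<in> S \<Longrightarrow> x + y \<in> S"
    and g: "\<And>i. i \<in> A \<Longrightarrow> g i \<in> S"
  shows "h (\<Sum>i\<in>A. g i) = (\<Sum>i\<in>A. h (g i))" and "(\<Sum>i\<in>A. g i) \<in> S"
proof -
  have h0: "h 0 = 0" using add[OF closed(1) closed(1)] by simp
  have "h (\<Sum>i\<in>A. g i) = (\<Sum>i\<in>A. h (g i)) \<and> (\<Sum>i\<in>A. g i) \<in> S"
    using g by (induction A rule: infinite_finite_induct) (auto simp: h0 closed add)
  then show "h (\<Sum>i\<in>A. g i) = (\<Sum>i\<in>A. h (g i))" "(\<Sum>i\<in>A. g i) \<in> S" by auto
qed

lemma sum_list_additive_on: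
  fixes h :: "'a::ab_group_add \<Rightarrow> 'c::ab_group_add"
  assumes add: "\<And>x y. x \<in> S \<Longrightarrow> y \<in> S \<Longrightarrow> h (x + y) = h x + h y"
    and closed: "0 \<in> S" "\<And>x y. x \<in> S \<Longrightarrow> y \<in> S \<Longrightarrow> x + y \<in> S"
    and g: "\<And>z. z \<in> set zs \<Longrightarrow> g z \<in> S"
  shows "h (\<Sum>z\<leftarrow>zs. g z) = (\<Sum>z\<leftarrow>zs. h (g z))" and "(\<Sum>z\<leftarrow>zs. g z) \<in> S"
proof -
  have h0: "h 0 = 0" using add[OF closed(1) closed(1)] by simp
  have "h (\<Sum>z\<leftarrow>zs. g z) = (\<Sum>z\<leftarrow>zs. h (g z)) \<and> (\<Sum>z\<leftarrow>zs. g z) \<in> S"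
    using g by (induction zs) (auto simp: h0 closed add)
  then show "h (\<Sum>z\<leftarrow>zs. g z) = (\<Sum>z\<leftarrow>zs. h (g z))" "(\<Sum>z\<leftarrow>zs. g z) \<in> S" by auto
qed

lemma sum_fun_apply: "(\<Sum>i\<in>A. f i) x = (\<Sum>i\<in>A. f i x)"
  by (induction A rule: infinite_finite_induct) auto

lemma sum_list_additive:
  fixes h :: "'a::ab_group_add \<Rightarrow> 'c::ab_group_add"
  assumes "\<And>x y. h (x + y) = h x + h y"
  shows "h (\<Sum>z\<leftarrow>zs. g z) = (\<Sum>z\<leftarrow>zs. h (g z))"
  by (rule sum_list_additive_on(1)[where S = UNIV]) (simp_all add: assms)

lemma sum_list_eq_sum_nth: "(\<Sum>z\<leftarrow>zs. F z) = (\<Sum>j<length zs. F (zs ! j))"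
  by (simp add: sum_list_sum_nth atLeast0LessThan)

lemma additive_diff:
  fixes h :: "'a::ab_group_add \<Rightarrow> 'c::ab_group_add"
  assumes "\<And>x y. h (x + y) = h x + h y"
  shows "h (x - y) = h x - h y" and "h (- x) = - h x" and "h 0 = 0"
proof -
  show h0: "h 0 = 0" using assms[of 0 0] by simp
  show "h (- x) = - h x" for x using assms[of x "- x"] h0 by (metis add.right_inverse minus_unique)
  then show "h (x - y) = h x - h y" using assms[of x "- y"] by simp
qed

section \<open>Finitely supported integer functions\<close>

definition finsupp :: "('a \<Rightarrow> int) set" where
  "finsupp = {c. finite (fsupp c)}"

definition zscale :: "int \<Rightarrow> ('a \<Rightarrow> int) \<Rightarrow> ('a \<Rightarrow> int)" where
  "zscale k c = (\<lambda>q. k * c q)"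

definition push_forward :: "('a \<Rightarrow> 'c) \<Rightarrow> ('a \<Rightarrow> int) \<Rightarrow> ('c \<Rightarrow> int)" where
  "push_forward F c = (\<lambda>q. \<Sum>p\<in>{p\<in>fsupp c. F p = q}. c p)"

lemma fsupp_add: "fsupp (c + d) \<subseteq> fsupp c \<union> fsupp d"
  by (auto simp: fsupp_def)

lemma fsupp_push_forward: "fsupp (push_forward F c) \<subseteq> F ` fsupp c"
proof
  fix q assume q: "q \<in> fsupp (push_forward F c)"
  show "q \<in> F ` fsupp c"
  proof (rule ccontr)
    assume "q \<notin> F ` fsupp c"
    then have "{p \<in> fsupp c. F p = q} = {}" by auto
    then have "push_forward F c q = 0" unfolding push_forward_def by (simp only: sum.empty)
    then show False using q by (simp add: fsupp_def)
  qed
qed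

lemma finsupp_add [intro]: "c \<in> finsupp \<Longrightarrow> d \<in> finsupp \<Longrightarrow> c + d \<in> finsupp"
  unfolding finsupp_def using fsupp_add by (metis finite_Un finite_subset mem_Collect_eq)

lemma finsupp_uminus [intro]: "c \<in> finsupp \<Longrightarrow> - c \<in> finsupp"
  by (simp add: finsupp_def fsupp_def)

lemma finsupp_diff [intro]: "c \<in> finsupp \<Longrightarrow> d \<in> finsupp \<Longrightarrow> c - d \<in> finsupp"
  using finsupp_add[of c "- d"] by auto

lemma finsupp_zero [simp, intro]: "0 \<in> finsupp"
  by (simp add: finsupp_def fsupp_def)

lemma fsupp_delta: "fsupp (delta p) = {p}"
  by (simp add: fsupp_def delta_def)

lemma finsupp_delta [simp, intro]: "delta p \<in> finsupp"
  by (simp add: finsupp_def fsupp_delta)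

lemma finsupp_zscale [intro]: "c \<in> finsupp \<Longrightarrow> zscale k c \<in> finsupp"
  unfolding finsupp_def mem_Collect_eq by (rule finite_subset[of _ "fsupp c"]) (auto simp: fsupp_def zscale_def)

lemma finsupp_push_forward [intro]: "c \<in> finsupp \<Longrightarrow> push_forward F c \<in> finsupp"
  unfolding finsupp_def using fsupp_push_forward by (metis finite_imageI finite_subset mem_Collect_eq)

lemma finsupp_sum_list: "(\<And>z. z \<in> set zs \<Longrightarrow> c z \<in> finsupp) \<Longrightarrow> (\<Sum>z\<leftarrow>zs. c z) \<in> finsupp"
  by (rule sum_list_additive_on(2)[where h = id]) auto

lemma push_forward_eq_sum:
  assumes "finite A" "fsupp c \<subseteq> A"
  shows "push_forward F c q = (\<Sum>p\<in>{p\<in>A. F p = q}. c p)"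
  unfolding push_forward_def
  by (rule sum.mono_neutral_left) (use assms in \<open>auto simp: fsupp_def\<close>)

lemma push_forward_add:
  assumes "c \<in> finsupp" "d \<in> finsupp"
  shows "push_forward F (c + d) = push_forward F c + push_forward F d"
proof
  fix q
  let ?A = "fsupp c \<union> fsupp d"
  have A: "finite ?A" using assms by (auto simp: finsupp_def)
  have "push_forward F (c + d) q = (\<Sum>p\<in>{p\<in>?A. F p = q}. (c + d) p)"
    by (rule push_forward_eq_sum[OF A fsupp_add])
  also have "\<dots> = push_forward F c q + push_forward F d q"
    by (simp add: sum.distrib push_forward_eq_sum[OF A])
  finally show "push_forward F (c + d) q = (push_forward F c + push_forward F d) q" by simp
qed

lemma push_forward_diff:
  assumes "c \<in> finsupp" "d \<in> finsupp"
  shows "push_forward F (c - d) = push_forward F c - push_forward F d"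
proof -
  have "push_forward F (- d) = - push_forward F d"
    by (simp add: push_forward_def fsupp_def sum_negf fun_eq_iff)
  then show ?thesis using push_forward_add[of c "- d" F] assms by auto
qed

lemma zscale_diff: "zscale k (c - d) = zscale k c - zscale k d"
  by (simp add: zscale_def fun_eq_iff right_diff_distrib)

lemma push_forward_zscale: "push_forward F (zscale k c) = zscale k (push_forward F c)"
proof (cases "k = 0")
  case False
  then have "fsupp (zscale k c) = fsupp c" by (auto simp: fsupp_def zscale_def)
  then show ?thesis by (simp add: push_forward_def zscale_def sum_distrib_left)
qed (simp add: push_forward_def zscale_def fsupp_def fun_eq_iff)

lemma push_forward_delta: "push_forward F (delta p) = delta (F p)"
proof -
  have "{p' \<in> fsupp (delta p). F p' = q} = (if F p = q then {p} else {})" for q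
    by (auto simp: fsupp_def delta_def)
  then show ?thesis by (auto simp: push_forward_def delta_def fun_eq_iff)
qed

lemma push_forward_zero [simp]: "push_forward F 0 = 0"
  by (simp add: push_forward_def fsupp_def fun_eq_iff)

lemma finsupp_expansion:
  assumes "c \<in> finsupp"
  shows "c = (\<Sum>p\<in>fsupp c. zscale (c p) (delta p))"
proof
  fix q
  have "(\<Sum>p\<in>fsupp c. zscale (c p) (delta p)) q = (\<Sum>p\<in>fsupp c. if q = p then c p else 0)"
    by (auto simp: sum_fun_apply zscale_def delta_def intro!: sum.cong)
  also have "\<dots> = c q"
    using assms by (simp add: finsupp_def fsupp_def)
  finally show "c q = (\<Sum>p\<in>fsupp c. zscale (c p) (delta p)) q" by simp
qed

lemma finsupp_linear_expansion:
  fixes L :: "('a \<Rightarrow> int) \<Rightarrow> 'c::ab_group_add"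
  assumes add: "\<And>c d. c \<in> finsupp \<Longrightarrow> d \<in> finsupp \<Longrightarrow> L (c + d) = L c + L d"
    and scale: "\<And>k c. c \<in> finsupp \<Longrightarrow> L (zscale k c) = S k (L c)"
    and c: "c \<in> finsupp"
  shows "L c = (\<Sum>p\<in>fsupp c. S (c p) (L (delta p)))"
proof -
  have "L c = L (\<Sum>p\<in>fsupp c. zscale (c p) (delta p))" using finsupp_expansion[OF c] by simp
  also have "\<dots> = (\<Sum>p\<in>fsupp c. L (zscale (c p) (delta p)))"
    by (rule sum_additive_on(1)[where S = finsupp, OF add]) auto
  finally show ?thesis by (simp add: scale)
qed

lemma push_forward_comp:
  assumes "c \<in> finsupp"
  shows "push_forward G (push_forward F c) = push_forward (G \<circ> F) c"
  using finsupp_linear_expansion[of "\<lambda>c. push_forward G (push_forward F c)" zscale, OF _ _ assms]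
    finsupp_linear_expansion[of "push_forward (G \<circ> F)" zscale, OF _ _ assms]
  by (simp add: push_forward_add push_forward_zscale push_forward_delta finsupp_push_forward)

section \<open>Generators and relations of the tensor product\<close>

definition eval_pair :: "'m \<times> ('m \<Rightarrow> 'b) \<Rightarrow> 'b" where
  "eval_pair p = snd p (fst p)"

lemma evM_eq_sum:
  assumes "finite A" "fsupp c \<subseteq> A"
  shows "evM c = (\<Sum>p\<in>A. of_int (c p) * eval_pair p)"
  unfolding evM_def eval_pair_def
  by (rule sum.mono_neutral_left) (use assms in \<open>auto simp: fsupp_def\<close>)

lemma evM_add:
  assumes "c \<in> finsupp" "d \<in> finsupp"
  shows "evM (c + d) = evM c + evM d"
proof -
  let ?A = "fsupp c \<union> fsupp d"
  have A: "finite ?A" using assms by (auto simp: finsupp_def)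
  have "evM (c + d) = (\<Sum>p\<in>?A. of_int ((c + d) p) * eval_pair p)"
    by (rule evM_eq_sum[OF A fsupp_add])
  also have "\<dots> = evM c + evM d"
    by (simp add: sum.distrib distrib_right evM_eq_sum[OF A])
  finally show ?thesis .
qed

lemma evM_zscale: "evM (zscale k c) = of_int k * evM c"
proof (cases "k = 0")
  case False
  then have "fsupp (zscale k c) = fsupp c" by (auto simp: fsupp_def zscale_def)
  then show ?thesis by (simp add: evM_def zscale_def sum_distrib_left mult.assoc)
qed (simp add: evM_def zscale_def fsupp_def)

lemma evM_diff:
  assumes "c \<in> finsupp" "d \<in> finsupp"
  shows "evM (c - d) = evM c - evM d"
proof -
  have "- d = zscale (- 1) d" by (simp add: zscale_def fun_eq_iff)
  then have "evM (- d) = - evM d" by (simp add: evM_zscale)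
  then show ?thesis using evM_add[of c "- d"] assms by auto
qed

lemma evM_delta: "evM (delta p) = eval_pair p"
  by (simp add: evM_def eval_pair_def fsupp_def delta_def)

lemma evM_push_forward:
  assumes "c \<in> finsupp"
  shows "evM (push_forward F c) = (\<Sum>p\<in>fsupp c. of_int (c p) * eval_pair (F p))"
  using finsupp_linear_expansion[of "\<lambda>c. evM (push_forward F c)" "\<lambda>k b. of_int k * b", OF _ _ assms]
  by (simp add: push_forward_add push_forward_zscale push_forward_delta evM_add evM_zscale
      evM_delta finsupp_push_forward)

lemma tlact_eq_push_forward: "tlact sm b c = push_forward (\<lambda>p. (sm b (fst p), snd p)) c"
  by (simp add: tlact_def push_forward_def)

lemma tract_eq_push_forward: "tract c b = push_forward (\<lambda>p. (fst p, \<lambda>x. snd p x * b)) c"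
  by (simp add: tract_def push_forward_def)

lemma dualM_add: "f \<in> dualM sm \<Longrightarrow> f (x + y) = f x + f y"
  by (simp add: dualM_def blin_def)

lemma dualM_scalar: "f \<in> dualM sm \<Longrightarrow> f (sm b x) = b * f x"
  by (simp add: dualM_def blin_def)

lemma dualM_plus: "f \<in> dualM sm \<Longrightarrow> g \<in> dualM sm \<Longrightarrow> f + g \<in> dualM sm"
  by (simp add: dualM_def blin_def algebra_simps)

lemma dualM_comp_EndB: "f \<in> dualM sm \<Longrightarrow> s \<in> EndB sm \<Longrightarrow> f \<circ> s \<in> dualM sm"
  by (simp add: dualM_def EndB_def blin_def)

lemma dualM_mult_right: "f \<in> dualM sm \<Longrightarrow> (\<lambda>x. f x * b) \<in> dualM sm"
  by (simp add: dualM_def blin_def algebra_simps)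

lemma freeT_iff: "c \<in> freeT sm \<longleftrightarrow> c \<in> finsupp \<and> (\<forall>p\<in>fsupp c. snd p \<in> dualM sm)"
  by (simp add: freeT_def finsupp_def)

lemma freeT_finsupp: "c \<in> freeT sm \<Longrightarrow> c \<in> finsupp"
  by (simp add: freeT_iff)

lemma freeT_add: "c \<in> freeT sm \<Longrightarrow> d \<in> freeT sm \<Longrightarrow> c + d \<in> freeT sm"
  unfolding freeT_iff using fsupp_add[of c d] by blast

lemma freeT_zscale: "c \<in> freeT sm \<Longrightarrow> zscale k c \<in> freeT sm"
  using finsupp_zscale[of c k] unfolding freeT_iff by (auto simp: fsupp_def zscale_def)

lemma freeT_diff:
  assumes "c \<in> freeT sm" "d \<in> freeT sm"
  shows "c - d \<in> freeT sm"
proof -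
  have "c - d = c + zscale (- 1) d" by (simp add: zscale_def fun_eq_iff)
  then show ?thesis using assms freeT_add freeT_zscale by metis
qed

lemma freeT_zero: "0 \<in> freeT sm"
  by (simp add: freeT_iff fsupp_def)

lemma freeT_delta: "f \<in> dualM sm \<Longrightarrow> delta (x, f) \<in> freeT sm"
  by (simp add: freeT_iff fsupp_delta)

lemma freeT_push_forward:
  "c \<in> freeT sm \<Longrightarrow> (\<And>p. snd p \<in> dualM sm \<Longrightarrow> snd (F p) \<in> dualM sm) \<Longrightarrow>
    push_forward F c \<in> freeT sm"
  unfolding freeT_iff using fsupp_push_forward[of F c] by blast

lemma kerev_freeT: "c \<in> kerev sm \<Longrightarrow> c \<in> freeT sm"
  by (simp add: kerev_def)

lemma kerev_finsupp: "c \<in> kerev sm \<Longrightarrow> c \<in> finsupp"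
  by (auto simp: kerev_def freeT_finsupp)

lemma kerev_add: "c \<in> kerev sm \<Longrightarrow> d \<in> kerev sm \<Longrightarrow> c + d \<in> kerev sm"
  by (auto simp: kerev_def freeT_add evM_add freeT_finsupp)

lemma kerev_diff: "c \<in> kerev sm \<Longrightarrow> d \<in> kerev sm \<Longrightarrow> c - d \<in> kerev sm"
  by (auto simp: kerev_def freeT_diff evM_diff freeT_finsupp)

lemma kerev_zscale: "c \<in> kerev sm \<Longrightarrow> zscale k c \<in> kerev sm"
  by (auto simp: kerev_def freeT_zscale evM_zscale)

lemma kerev_zero: "0 \<in> kerev sm"
  by (simp add: kerev_def freeT_zero evM_def fsupp_def)

lemma kerev_sum_list: "(\<And>z. z \<in> set zs \<Longrightarrow> c z \<in> kerev sm) \<Longrightarrow> (\<Sum>z\<leftarrow>zs. c z) \<in> kerev sm"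
  by (rule sum_list_additive_on(2)[where h = id]) (auto intro: kerev_zero kerev_add)

lemma relsub_eq_sum_list: "(\<lambda>p. \<Sum>(k, g)\<leftarrow>gs. k * g p) = (\<Sum>(k, g)\<leftarrow>gs. zscale k g)"
  by (induction gs) (auto simp: zscale_def fun_eq_iff)

lemma relsub_zero: "0 \<in> relsub sm"
  unfolding relsub_def relsub_eq_sum_list by (rule CollectI, rule exI[of _ "[]"]) simp

lemma relgens_relsub: "g \<in> relgens sm \<Longrightarrow> g \<in> relsub sm"
  unfolding relsub_def relsub_eq_sum_list
  by (rule CollectI, rule exI[of _ "[(1, g)]"]) (simp add: zscale_def)

lemma relsub_add:
  assumes "c \<in> relsub sm" "d \<in> relsub sm"
  shows "c + d \<in> relsub sm"
proof -
  obtain gs hs where "set (map snd gs) \<subseteq> relgens sm" "c = (\<Sum>(k, g)\<leftarrow>gs. zscale k g)"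
    "set (map snd hs) \<subseteq> relgens sm" "d = (\<Sum>(k, g)\<leftarrow>hs. zscale k g)"
    using assms unfolding relsub_def relsub_eq_sum_list by blast
  then show ?thesis
    unfolding relsub_def relsub_eq_sum_list by (intro CollectI exI[of _ "gs @ hs"]) auto
qed

lemma relsub_zscale:
  assumes "c \<in> relsub sm"
  shows "zscale k c \<in> relsub sm"
proof -
  obtain gs where gs: "set (map snd gs) \<subseteq> relgens sm" "c = (\<lambda>p. \<Sum>(k, g)\<leftarrow>gs. k * g p)"
    using assms unfolding relsub_def by blast
  let ?gs = "map (\<lambda>(l, g). (k * l, g)) gs"
  have "zscale k c = (\<lambda>p. \<Sum>(k, g)\<leftarrow>?gs. k * g p)"
    unfolding gs(2) zscale_def by (induction gs) (auto simp: fun_eq_iff algebra_simps)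
  moreover have "set (map snd ?gs) \<subseteq> relgens sm" using gs(1) by auto
  ultimately show ?thesis unfolding relsub_def by blast
qed

lemma relsub_uminus: "c \<in> relsub sm \<Longrightarrow> - c \<in> relsub sm"
proof -
  have "- c = zscale (- 1) c" by (simp add: zscale_def fun_eq_iff)
  then show "c \<in> relsub sm \<Longrightarrow> - c \<in> relsub sm" using relsub_zscale by metis
qed

lemma relsub_diff: "c \<in> relsub sm \<Longrightarrow> d \<in> relsub sm \<Longrightarrow> c - d \<in> relsub sm"
  using relsub_add[of c sm "- d"] relsub_uminus[of d sm] by simp

lemma relsub_sum: "(\<And>i. i \<in> A \<Longrightarrow> c i \<in> relsub sm) \<Longrightarrow> (\<Sum>i\<in>A. c i) \<in> relsub sm"
  by (rule sum_additive_on(2)[where h = id]) (auto intro: relsub_zero relsub_add)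

lemma relsub_sum_list: "(\<And>z. z \<in> set zs \<Longrightarrow> c z \<in> relsub sm) \<Longrightarrow> (\<Sum>z\<leftarrow>zs. c z) \<in> relsub sm"
  by (rule sum_list_additive_on(2)[where h = id]) (auto intro: relsub_zero relsub_add)

lemma relsub_induct:
  assumes "c \<in> relsub sm" and "P 0"
    and "\<And>c d. c \<in> relsub sm \<Longrightarrow> d \<in> relsub sm \<Longrightarrow> P c \<Longrightarrow> P d \<Longrightarrow> P (c + d)"
    and "\<And>k g. g \<in> relgens sm \<Longrightarrow> P (zscale k g)"
  shows "P c"
proof -
  obtain gs where gs: "set (map snd gs) \<subseteq> relgens sm" "c = (\<Sum>(k, g)\<leftarrow>gs. zscale k g)"
    using assms(1) unfolding relsub_def relsub_eq_sum_list by blast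
  have "P (\<Sum>(k, g)\<leftarrow>gs. zscale k g) \<and> (\<Sum>(k, g)\<leftarrow>gs. zscale k g) \<in> relsub sm"
    using gs(1)
  proof (induction gs)
    case (Cons kg gs)
    obtain k g where kg: "kg = (k, g)" by fastforce
    then have g: "g \<in> relgens sm" using Cons.prems by simp
    have IH: "P (\<Sum>(k, g)\<leftarrow>gs. zscale k g)" "(\<Sum>(k, g)\<leftarrow>gs. zscale k g) \<in> relsub sm"
      using Cons by auto
    have kg_relsub: "zscale k g \<in> relsub sm" by (rule relsub_zscale[OF relgens_relsub[OF g]])
    have "P (zscale k g + (\<Sum>(k, g)\<leftarrow>gs. zscale k g))"
      by (rule assms(3)[OF kg_relsub IH(2) assms(4)[OF g] IH(1)])
    moreover have "zscale k g + (\<Sum>(k, g)\<leftarrow>gs. zscale k g) \<in> relsub sm"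
      by (rule relsub_add[OF kg_relsub IH(2)])
    ultimately show ?case by (simp only: kg list.map sum_list.Cons prod.case)
  qed (simp add: assms(2) relsub_zero)
  then show ?thesis using gs(2) by simp
qed

lemma relgens_cases:
  assumes "g \<in> relgens sm"
  obtains x y f where "f \<in> dualM sm" "g = delta (x + y, f) - delta (x, f) - delta (y, f)"
  | x f h where "f \<in> dualM sm" "h \<in> dualM sm" "g = delta (x, f + h) - delta (x, f) - delta (x, h)"
  | x f s where "f \<in> dualM sm" "s \<in> EndB sm" "g = delta (s x, f) - delta (x, f \<circ> s)"
  using assms unfolding relgens_def by blast

lemma relgens_kerev: "g \<in> relgens sm \<Longrightarrow> g \<in> kerev sm"
  by (erule relgens_cases)
    (auto simp: kerev_def freeT_diff freeT_delta evM_diff finsupp_diff evM_delta eval_pair_def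
      dualM_add dualM_plus dualM_comp_EndB)

lemma relsub_kerev: "c \<in> relsub sm \<Longrightarrow> c \<in> kerev sm"
  by (erule relsub_induct[where P = "\<lambda>c. c \<in> kerev sm"])
    (auto intro: kerev_zero kerev_add kerev_zscale relgens_kerev)

lemma relsub_finsupp: "c \<in> relsub sm \<Longrightarrow> c \<in> finsupp"
  using relsub_kerev kerev_finsupp by blast

lemma push_forward_relsub:
  assumes "\<And>g. g \<in> relgens sm \<Longrightarrow> push_forward F g \<in> relsub sm" and "c \<in> relsub sm"
  shows "push_forward F c \<in> relsub sm"
  using assms(2)
  by (rule relsub_induct[where P = "\<lambda>c. push_forward F c \<in> relsub sm"])
    (simp_all add: relsub_zero push_forward_zscale relsub_zscale assms(1) push_forward_add
      relsub_finsupp relsub_add)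

lemma push_forward_delta_diff:
  "push_forward F (delta a - delta b) = delta (F a) - delta (F b)"
  "push_forward F (delta a - delta b - delta c) = delta (F a) - delta (F b) - delta (F c)"
  by (simp_all add: push_forward_diff finsupp_diff push_forward_delta)

lemma tlact_relsub:
  assumes sm: "lmod sm" and c: "c \<in> relsub sm"
  shows "tlact sm b c \<in> relsub sm"
  unfolding tlact_eq_push_forward
proof (rule push_forward_relsub[OF _ c])
  fix g assume "g \<in> relgens sm"
  then have "push_forward (\<lambda>p. (sm b (fst p), snd p)) g \<in> relgens sm"
  proof (cases rule: relgens_cases)
    case (1 x y f)
    have "sm b (x + y) = sm b x + sm b y" using sm by (simp add: lmod_def)
    then show ?thesis using 1 unfolding relgens_def by (simp add: push_forward_delta_diff) blast
  next
    case (2 x f h)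
    then show ?thesis unfolding relgens_def by (simp add: push_forward_delta_diff) blast
  next
    case (3 x f s)
    have "sm b (s x) = s (sm b x)" using 3 by (simp add: EndB_def blin_def)
    then show ?thesis using 3 unfolding relgens_def by (simp add: push_forward_delta_diff) blast
  qed
  then show "push_forward (\<lambda>p. (sm b (fst p), snd p)) g \<in> relsub sm" by (rule relgens_relsub)
qed

lemma tract_relsub:
  assumes c: "c \<in> relsub sm"
  shows "tract c b \<in> relsub sm"
  unfolding tract_eq_push_forward
proof (rule push_forward_relsub[OF _ c])
  fix g assume "g \<in> relgens sm"
  then have "push_forward (\<lambda>p. (fst p, \<lambda>x. snd p x * b)) g \<in> relgens sm"
  proof (cases rule: relgens_cases)
    case (1 x y f)
    then show ?thesis
      unfolding relgens_def using dualM_mult_right by (simp add: push_forward_delta_diff) blast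
  next
    case (2 x f h)
    have "(\<lambda>y. (f + h) y * b) = (\<lambda>y. f y * b) + (\<lambda>y. h y * b)"
      by (simp add: fun_eq_iff algebra_simps)
    then show ?thesis using 2
      unfolding relgens_def using dualM_mult_right by (simp add: push_forward_delta_diff) blast
  next
    case (3 x f s)
    have "(\<lambda>y. (f \<circ> s) y * b) = (\<lambda>y. f y * b) \<circ> s" by (simp add: fun_eq_iff)
    then show ?thesis using 3
      unfolding relgens_def using dualM_mult_right by (simp add: push_forward_delta_diff) blast
  qed
  then show "push_forward (\<lambda>p. (fst p, \<lambda>x. snd p x * b)) g \<in> relsub sm" by (rule relgens_relsub)
qed

lemma tlact_kerev:
  assumes c: "c \<in> kerev sm"
  shows "tlact sm b c \<in> kerev sm"
proof -
  have supp: "snd p \<in> dualM sm" if "p \<in> fsupp c" for p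
    using c that by (auto simp: kerev_def freeT_iff)
  have "evM (tlact sm b c) = (\<Sum>p\<in>fsupp c. of_int (c p) * eval_pair (sm b (fst p), snd p))"
    unfolding tlact_eq_push_forward by (rule evM_push_forward[OF kerev_finsupp[OF c]])
  also have "\<dots> = (\<Sum>p\<in>fsupp c. b * (of_int (c p) * eval_pair p))"
    by (intro sum.cong) (simp_all add: eval_pair_def dualM_scalar supp mult.assoc mult_of_int_commute)
  also have "\<dots> = b * evM c" by (simp add: evM_def eval_pair_def sum_distrib_left)
  finally have "evM (tlact sm b c) = 0" using c by (simp add: kerev_def)
  moreover have "tlact sm b c \<in> freeT sm"
    unfolding tlact_eq_push_forward by (rule freeT_push_forward) (use c in \<open>simp_all add: kerev_def\<close>)
  ultimately show ?thesis by (simp add: kerev_def)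
qed

lemma tract_kerev:
  assumes c: "c \<in> kerev sm"
  shows "tract c b \<in> kerev sm"
proof -
  have "evM (tract c b) = (\<Sum>p\<in>fsupp c. of_int (c p) * eval_pair (fst p, \<lambda>x. snd p x * b))"
    unfolding tract_eq_push_forward by (rule evM_push_forward[OF kerev_finsupp[OF c]])
  also have "\<dots> = evM c * b" by (simp add: evM_def eval_pair_def sum_distrib_right mult.assoc)
  finally have "evM (tract c b) = 0" using c by (simp add: kerev_def)
  moreover have "tract c b \<in> freeT sm"
    unfolding tract_eq_push_forward
    by (rule freeT_push_forward) (use c dualM_mult_right in \<open>simp_all add: kerev_def\<close>)
  ultimately show ?thesis by (simp add: kerev_def)
qed

lemma tlact_finsupp: "c \<in> finsupp \<Longrightarrow> tlact sm b c \<in> finsupp"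
  unfolding tlact_eq_push_forward by (rule finsupp_push_forward)

lemma tlact_tract_commute: "c \<in> finsupp \<Longrightarrow> tlact sm a (tract c b) = tract (tlact sm a c) b"
  by (simp add: tlact_eq_push_forward tract_eq_push_forward push_forward_comp o_def)

lemma tlact_diff: "c \<in> finsupp \<Longrightarrow> d \<in> finsupp \<Longrightarrow> tlact sm b (c - d) = tlact sm b c - tlact sm b d"
  unfolding tlact_eq_push_forward by (rule push_forward_diff)

lemma tract_diff: "c \<in> finsupp \<Longrightarrow> d \<in> finsupp \<Longrightarrow> tract (c - d) b = tract c b - tract d b"
  unfolding tract_eq_push_forward by (rule push_forward_diff)

lemma tlact_sum:
  "(\<And>i. i \<in> A \<Longrightarrow> c i \<in> finsupp) \<Longrightarrow> tlact sm b (\<Sum>i\<in>A. c i) = (\<Sum>i\<in>A. tlact sm b (c i))"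
  unfolding tlact_eq_push_forward
  by (rule sum_additive_on(1)[where S = finsupp and g = c, OF push_forward_add]) auto

lemma tlact_sum_list:
  "(\<And>z. z \<in> set zs \<Longrightarrow> c z \<in> finsupp) \<Longrightarrow>
    tlact sm b (\<Sum>z\<leftarrow>zs. c z) = (\<Sum>z\<leftarrow>zs. tlact sm b (c z))"
  unfolding tlact_eq_push_forward
  by (rule sum_list_additive_on(1)[where S = finsupp and g = c, OF push_forward_add]) auto

lemma tract_sum_list:
  "(\<And>z. z \<in> set zs \<Longrightarrow> c z \<in> finsupp) \<Longrightarrow> tract (\<Sum>z\<leftarrow>zs. c z) b = (\<Sum>z\<leftarrow>zs. tract (c z) b)"
  unfolding tract_eq_push_forward
  by (rule sum_list_additive_on(1)[where S = finsupp and g = c, OF push_forward_add]) auto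

lemma tract_freeT: "c \<in> freeT sm \<Longrightarrow> tract c b \<in> freeT sm"
  unfolding tract_eq_push_forward by (rule freeT_push_forward) (simp_all add: dualM_mult_right)

section \<open>Maps that are linear modulo the relations\<close>

definition rel_linear ::
  "('b::ring_1 \<Rightarrow> 'm::ab_group_add \<Rightarrow> 'm) \<Rightarrow> ('b \<Rightarrow> 'x::ab_group_add \<Rightarrow> 'x)
     \<Rightarrow> ('x \<Rightarrow> ('m \<times> ('m \<Rightarrow> 'b) \<Rightarrow> int)) \<Rightarrow> bool" where
  "rel_linear sm smX g \<longleftrightarrow> (\<forall>x. g x \<in> freeT sm) \<and>
     (\<forall>x y. g (x + y) - g x - g y \<in> relsub sm) \<and>
     (\<forall>b x. g (smX b x) - tlact sm b (g x) \<in> relsub sm)"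

lemma rel_linear_freeT: "rel_linear sm smX g \<Longrightarrow> g x \<in> freeT sm"
  by (simp add: rel_linear_def)

lemma rel_linear_add: "rel_linear sm smX g \<Longrightarrow> g (x + y) - g x - g y \<in> relsub sm"
  by (simp add: rel_linear_def)

lemma rel_linear_scalar: "rel_linear sm smX g \<Longrightarrow> g (smX b x) - tlact sm b (g x) \<in> relsub sm"
  by (simp add: rel_linear_def)

lemma rel_linear_zero: "rel_linear sm smX g \<Longrightarrow> g 0 \<in> relsub sm"
  using relsub_uminus[OF rel_linear_add[of sm smX g 0 0]] by simp

lemma rel_linear_minus:
  assumes g: "rel_linear sm smX g"
  shows "g (- x) + g x \<in> relsub sm"
proof -
  have "g (- x) + g x = g 0 - (g (x + - x) - g x - g (- x))" by simp
  also have "\<dots> \<in> relsub sm" by (intro relsub_diff rel_linear_zero[OF g] rel_linear_add[OF g])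
  finally show ?thesis .
qed

lemma rel_linear_relsub_closed:
  assumes "lmod sm" and g: "rel_linear sm smX g"
    and "g x \<in> relsub sm" "g y \<in> relsub sm"
  shows "g (x + y) \<in> relsub sm" and "g (smX b x) \<in> relsub sm"
proof -
  have "g (x + y) = (g (x + y) - g x - g y) + g x + g y" by simp
  then show "g (x + y) \<in> relsub sm"
    using assms by (metis rel_linear_add relsub_add)
  have "g (smX b x) = (g (smX b x) - tlact sm b (g x)) + tlact sm b (g x)" by simp
  then show "g (smX b x) \<in> relsub sm"
    using assms by (metis rel_linear_scalar tlact_relsub relsub_add)
qed

lemma rel_linear_comp:
  "rel_linear sm smY g \<Longrightarrow> blin smX smY h \<Longrightarrow> rel_linear sm smX (g \<circ> h)"
  by (simp add: rel_linear_def blin_def)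

lemma rel_linear_sum:
  assumes G: "\<And>j. j \<in> A \<Longrightarrow> rel_linear sm smX (G j)"
  shows "rel_linear sm smX (\<lambda>x. \<Sum>j\<in>A. G j x)"
  unfolding rel_linear_def
proof (intro conjI allI)
  fix x y b
  have fin: "G j x \<in> finsupp" if "j \<in> A" for j
    using rel_linear_freeT[OF G[OF that]] by (rule freeT_finsupp)
  show "(\<Sum>j\<in>A. G j x) \<in> freeT sm"
    by (rule sum_additive_on(2)[where h = id]) (auto intro: freeT_zero freeT_add rel_linear_freeT[OF G])
  have "(\<Sum>j\<in>A. G j (x + y)) - (\<Sum>j\<in>A. G j x) - (\<Sum>j\<in>A. G j y) =
      (\<Sum>j\<in>A. G j (x + y) - G j x - G j y)"
    by (simp add: sum_subtractf)
  also have "\<dots> \<in> relsub sm" by (intro relsub_sum rel_linear_add[OF G])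
  finally show "(\<Sum>j\<in>A. G j (x + y)) - (\<Sum>j\<in>A. G j x) - (\<Sum>j\<in>A. G j y) \<in> relsub sm" .
  have "(\<Sum>j\<in>A. G j (smX b x)) - tlact sm b (\<Sum>j\<in>A. G j x) =
      (\<Sum>j\<in>A. G j (smX b x) - tlact sm b (G j x))"
    by (simp add: sum_subtractf tlact_sum fin)
  also have "\<dots> \<in> relsub sm" by (intro relsub_sum rel_linear_scalar[OF G])
  finally show "(\<Sum>j\<in>A. G j (smX b x)) - tlact sm b (\<Sum>j\<in>A. G j x) \<in> relsub sm" .
qed

lemma rel_linear_sum_diff:
  assumes g: "rel_linear sm smX g"
  shows "g (\<Sum>l\<in>A. z l) - (\<Sum>l\<in>A. g (z l)) \<in> relsub sm"
proof (induction A rule: infinite_finite_induct)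
  case (insert l A)
  have "g (\<Sum>l\<in>insert l A. z l) - (\<Sum>l\<in>insert l A. g (z l)) =
      (g (z l + (\<Sum>l\<in>A. z l)) - g (z l) - g (\<Sum>l\<in>A. z l)) +
      (g (\<Sum>l\<in>A. z l) - (\<Sum>l\<in>A. g (z l)))"
    using insert by (simp add: algebra_simps)
  also have "\<dots> \<in> relsub sm" by (intro relsub_add rel_linear_add[OF g] insert.IH)
  finally show ?case .
qed (simp_all add: rel_linear_zero[OF g])

lemma rel_linear_tract:
  assumes g: "rel_linear sm smX g"
  shows "rel_linear sm smX (\<lambda>x. tract (g x) b)"
  unfolding rel_linear_def
proof (intro conjI allI)
  fix x y a
  have fin: "g x \<in> finsupp" for x using rel_linear_freeT[OF g] by (rule freeT_finsupp)
  show "tract (g x) b \<in> freeT sm" by (intro tract_freeT rel_linear_freeT[OF g])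
  have "tract (g (x + y)) b - tract (g x) b - tract (g y) b = tract (g (x + y) - g x - g y) b"
    by (simp add: tract_diff fin finsupp_diff)
  also have "\<dots> \<in> relsub sm" by (intro tract_relsub rel_linear_add[OF g])
  finally show "tract (g (x + y)) b - tract (g x) b - tract (g y) b \<in> relsub sm" .
  have "tract (g (smX a x)) b - tlact sm a (tract (g x) b) = tract (g (smX a x) - tlact sm a (g x)) b"
    by (simp add: tract_diff fin tlact_tract_commute tlact_finsupp)
  also have "\<dots> \<in> relsub sm" by (intro tract_relsub rel_linear_scalar[OF g])
  finally show "tract (g (smX a x)) b - tlact sm a (tract (g x) b) \<in> relsub sm" .
qed

definition represents ::
  "('b::ring_1 \<Rightarrow> 'm::ab_group_add \<Rightarrow> 'm) \<Rightarrow> ('m \<times> ('m \<Rightarrow> 'b) \<Rightarrow> int)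
     \<Rightarrow> (('m \<Rightarrow> ('m \<times> ('m \<Rightarrow> 'b) \<Rightarrow> int)) \<times> 'm) list \<Rightarrow> bool" where
  "represents sm c R \<longleftrightarrow> (\<forall>(g, x)\<in>set R. rel_linear sm sm g \<and> range g \<subseteq> kerev sm) \<and>
     c - (\<Sum>(g, x)\<leftarrow>R. g x) \<in> relsub sm"

lemma representsI:
  "(\<And>g x. (g, x) \<in> set R \<Longrightarrow> rel_linear sm sm g \<and> range g \<subseteq> kerev sm) \<Longrightarrow>
    c - (\<Sum>(g, x)\<leftarrow>R. g x) \<in> relsub sm \<Longrightarrow> represents sm c R"
  by (auto simp: represents_def)

lemma representsD:
  assumes "represents sm c R"
  shows "c - (\<Sum>(g, x)\<leftarrow>R. g x) \<in> relsub sm"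
    and "(g, x) \<in> set R \<Longrightarrow> rel_linear sm sm g"
    and "(g, x) \<in> set R \<Longrightarrow> g y \<in> kerev sm"
  using assms unfolding represents_def by fastforce+

lemma represents_finsupp: "represents sm c R \<Longrightarrow> z \<in> set R \<Longrightarrow> (\<lambda>(g, x). g x) z \<in> finsupp"
  by (cases z) (auto intro: freeT_finsupp rel_linear_freeT representsD(2))

lemma represents_Nil: "c \<in> relsub sm \<Longrightarrow> represents sm c []"
  by (simp add: represents_def)

lemma represents_append:
  assumes R: "represents sm c R" and R': "represents sm d R'"
  shows "represents sm (c + d) (R @ R')"
proof (rule representsI)
  have "c + d - (\<Sum>(g, x)\<leftarrow>R @ R'. g x) = (c - (\<Sum>(g, x)\<leftarrow>R. g x)) + (d - (\<Sum>(g, x)\<leftarrow>R'. g x))"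
    by simp
  also have "\<dots> \<in> relsub sm" by (intro relsub_add representsD(1) R R')
  finally show "c + d - (\<Sum>(g, x)\<leftarrow>R @ R'. g x) \<in> relsub sm" .
qed (use representsD(2,3)[OF R] representsD(2,3)[OF R'] in auto)

lemma represents_uminus:
  assumes R: "represents sm c R"
  shows "represents sm (- c) (map (\<lambda>(g, x). (g, - x)) R)"
proof (rule representsI)
  have "- c - (\<Sum>(g, x)\<leftarrow>R. g (- x)) = - (c - (\<Sum>(g, x)\<leftarrow>R. g x)) - (\<Sum>(g, x)\<leftarrow>R. g (- x) + g x)"
    by (simp add: sum_list_addf split_def)
  also have "\<dots> \<in> relsub sm"
    by (rule relsub_diff[OF relsub_uminus[OF representsD(1)[OF R]] relsub_sum_list])
      (auto intro: rel_linear_minus representsD(2)[OF R])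
  finally show "- c - (\<Sum>(g, x)\<leftarrow>map (\<lambda>(g, x). (g, - x)) R. g x) \<in> relsub sm"
    by (simp add: o_def split_def)
qed (use representsD(2,3)[OF R] in auto)

lemma represents_tlact:
  assumes sm: "lmod sm" and R: "represents sm c R" and c: "c \<in> finsupp"
  shows "represents sm (tlact sm b c) (map (\<lambda>(g, x). (g, sm b x)) R)"
proof (rule representsI)
  note fin = represents_finsupp[OF R]
  have "tlact sm b (c - (\<Sum>(g, x)\<leftarrow>R. g x)) = tlact sm b c - (\<Sum>(g, x)\<leftarrow>R. tlact sm b (g x))"
    using tlact_diff[OF c finsupp_sum_list[where c = "\<lambda>(g, x). g x", OF fin]]
      tlact_sum_list[where c = "\<lambda>(g, x). g x", OF fin]
    by (simp add: split_def)
  then have "tlact sm b c - (\<Sum>(g, x)\<leftarrow>R. g (sm b x)) =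
      tlact sm b (c - (\<Sum>(g, x)\<leftarrow>R. g x)) - (\<Sum>(g, x)\<leftarrow>R. g (sm b x) - tlact sm b (g x))"
    by (simp add: sum_list_subtractf split_def)
  also have "\<dots> \<in> relsub sm"
    by (rule relsub_diff[OF tlact_relsub[OF sm representsD(1)[OF R]] relsub_sum_list])
      (auto intro: rel_linear_scalar representsD(2)[OF R])
  finally show "tlact sm b c - (\<Sum>(g, x)\<leftarrow>map (\<lambda>(g, x). (g, sm b x)) R. g x) \<in> relsub sm"
    by (simp add: o_def split_def)
qed (use representsD(2,3)[OF R] in auto)

lemma represents_tract:
  assumes R: "represents sm c R" and c: "c \<in> finsupp"
  shows "represents sm (tract c b) (map (\<lambda>(g, x). (\<lambda>y. tract (g y) b, x)) R)"
proof (rule representsI)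
  note fin = represents_finsupp[OF R]
  have "tract c b - (\<Sum>(g, x)\<leftarrow>R. tract (g x) b) = tract (c - (\<Sum>(g, x)\<leftarrow>R. g x)) b"
    using tract_diff[OF c finsupp_sum_list[where c = "\<lambda>(g, x). g x", OF fin]]
      tract_sum_list[where c = "\<lambda>(g, x). g x", OF fin]
    by (simp add: split_def)
  also have "\<dots> \<in> relsub sm" by (intro tract_relsub representsD(1)[OF R])
  finally show "tract c b - (\<Sum>(g, x)\<leftarrow>map (\<lambda>(g, x). (\<lambda>y. tract (g y) b, x)) R. g x) \<in> relsub sm"
    by (simp add: o_def split_def)
qed (use representsD(2,3)[OF R] in \<open>auto intro: rel_linear_tract tract_kerev\<close>)

section \<open>Using that \<open>M\<close> generates \<open>\<sigma>[M]\<close>\<close>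

lemma lmod_scalar_zero: "lmod sm \<Longrightarrow> sm b 0 = 0"
  using additive_diff(3)[of "sm b"] by (simp add: lmod_def)

lemma blin_sum: "blin smX smY h \<Longrightarrow> h (\<Sum>i\<in>A. g i) = (\<Sum>i\<in>A. h (g i))"
  by (rule sum_additive_on(1)[where S = UNIV]) (simp_all add: blin_def)

lemma blin_comp_EndB: "blin sm smY h \<Longrightarrow> a \<in> EndB sm \<Longrightarrow> blin sm smY (h \<circ> a)"
  by (simp add: blin_def EndB_def)

lemma blin_vsm_component: "blin sm (vsm sm) h \<Longrightarrow> (\<lambda>y. h y j) \<in> EndB sm"
  by (simp add: blin_def EndB_def vsm_def)

lemma blin_component_vsm: "blin (vsm sm) sm (\<lambda>z. z j)"
  by (simp add: blin_def vsm_def)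

lemma generator_decomposition:
  fixes sm :: "'b::ring_1 \<Rightarrow> 'm::ab_group_add \<Rightarrow> 'm"
  assumes sm: "lmod sm" and gen: "generates_sigma sm"
    and V: "0 \<in> V" "\<And>u v. u \<in> V \<Longrightarrow> v \<in> V \<Longrightarrow> u + v \<in> V"
      "\<And>b u. u \<in> V \<Longrightarrow> vsm sm b u \<in> V"
    and u: "u \<in> V" "\<And>i. n \<le> i \<Longrightarrow> u i = 0"
  obtains L :: nat and H W where "\<And>l. l < L \<Longrightarrow> blin sm (vsm sm) (H l)"
    and "\<And>l y. l < L \<Longrightarrow> H l y \<in> V" and "u = (\<Sum>l<L. H l (W l))"
proof -
  define U where "U = {z \<in> V. \<forall>i\<ge>n. z i = 0}"
  have fin_supp: "z \<in> dsumM" if "\<forall>i\<ge>n. z i = 0" for z :: "nat \<Rightarrow> 'm"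
  proof -
    have "{i. z i \<noteq> 0} \<subseteq> {..<n}" using that by (auto simp: not_less[symmetric])
    then show ?thesis unfolding dsumM_def by (auto intro: finite_subset)
  qed
  have "dsubmod sm U"
    using V fin_supp by (auto simp: U_def dsubmod_def vsm_def lmod_scalar_zero[OF sm])
  moreover have "dsubmod sm {0}"
    using fin_supp[of 0] by (auto simp: dsubmod_def vsm_def lmod_scalar_zero[OF sm] fun_eq_iff)
  moreover have "{0} \<subseteq> U" and "u \<in> U" using V u by (auto simp: U_def)
  ultimately obtain hs where hs: "\<forall>(h, x)\<in>set hs. homq sm U {0} h"
    and u_eq: "u - (\<Sum>(h, x)\<leftarrow>hs. h x) \<in> {0}"
    using gen unfolding generates_sigma_def by blast
  define H where "H l = fst (hs ! l)" for l
  define W where "W l = snd (hs ! l)" for l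
  have homq: "homq sm U {0} (H l)" if "l < length hs" for l
    using hs nth_mem[OF that] by (auto simp: H_def split_def)
  have "blin sm (vsm sm) (H l)" and "H l y \<in> V" if "l < length hs" for l y
    using homq[OF that] by (auto simp: homq_def blin_def U_def algebra_simps)
  moreover have "u = (\<Sum>l<length hs. H l (W l))"
  proof -
    have "u = (\<Sum>(h, x)\<leftarrow>hs. h x)" using u_eq by simp
    also have "\<dots> = (\<Sum>l<length hs. H l (W l))"
      by (simp add: sum_list_sum_nth atLeast0LessThan H_def W_def split_def)
    finally show ?thesis .
  qed
  ultimately show ?thesis by (rule that)
qed

lemma freeT_indexed_expansion:
  assumes "c \<in> freeT sm"
  obtains n :: nat and \<phi> k m where "\<And>i. i < n \<Longrightarrow> \<phi> i \<in> dualM sm"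
    and "c = (\<Sum>i<n. zscale (k i) (delta (m i, \<phi> i)))"
proof -
  have c: "c \<in> finsupp" "\<And>p. p \<in> fsupp c \<Longrightarrow> snd p \<in> dualM sm"
    using assms by (auto simp: freeT_iff)
  then obtain e where e: "bij_betw e {..<card (fsupp c)} (fsupp c)"
    using ex_bij_betw_nat_finite[of "fsupp c"] by (auto simp: finsupp_def atLeast0LessThan)
  have "snd (e i) \<in> dualM sm" if "i < card (fsupp c)" for i
    using c(2) bij_betwE[OF e] that by blast
  moreover have "c = (\<Sum>i<card (fsupp c). zscale (c (e i)) (delta (fst (e i), snd (e i))))"
  proof -
    have "c = (\<Sum>p\<in>fsupp c. zscale (c p) (delta p))" by (rule finsupp_expansion[OF c(1)])
    also have "\<dots> = (\<Sum>i<card (fsupp c). zscale (c (e i)) (delta (fst (e i), snd (e i))))"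
      using sum.reindex_bij_betw[OF e, of "\<lambda>p. zscale (c p) (delta p)"] by simp
    finally show ?thesis .
  qed
  ultimately show ?thesis
    by (rule that)
qed

lemma rel_linear_zscale_delta:
  assumes "f \<in> dualM sm"
  shows "rel_linear sm (vsm sm) (\<lambda>z. zscale k (delta (z i, f)))"
  unfolding rel_linear_def
proof (intro conjI allI)
  fix x y b
  show "zscale k (delta (x i, f)) \<in> freeT sm" by (intro freeT_zscale freeT_delta assms)
  have "delta ((x + y) i, f) - delta (x i, f) - delta (y i, f) \<in> relgens sm"
    using assms unfolding relgens_def by auto
  then have "zscale k (delta ((x + y) i, f) - delta (x i, f) - delta (y i, f)) \<in> relsub sm"
    by (intro relsub_zscale relgens_relsub)
  then show "zscale k (delta ((x + y) i, f)) - zscale k (delta (x i, f)) - zscale k (delta (y i, f))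
      \<in> relsub sm"
    by (simp add: zscale_diff)
  have "tlact sm b (zscale k (delta (x i, f))) = zscale k (delta (vsm sm b x i, f))"
    by (simp add: tlact_eq_push_forward push_forward_zscale push_forward_delta vsm_def)
  then show "zscale k (delta (vsm sm b x i, f)) - tlact sm b (zscale k (delta (x i, f))) \<in> relsub sm"
    by (simp add: relsub_zero)
qed

lemma represents_decomposition:
  assumes T: "rel_linear sm (vsm sm) T"
    and H: "\<And>l. l < L \<Longrightarrow> blin sm (vsm sm) (H l)" "\<And>l y. l < L \<Longrightarrow> T (H l y) \<in> kerev sm"
  shows "represents sm (T (\<Sum>l<L. H l (W l))) (map (\<lambda>l. (T \<circ> H l, W l)) [0..<L])"
proof (rule representsI)
  fix g x assume "(g, x) \<in> set (map (\<lambda>l. (T \<circ> H l, W l)) [0..<L])"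
  then obtain l where "l < L" "g = T \<circ> H l" by auto
  then show "rel_linear sm sm g \<and> range g \<subseteq> kerev sm"
    using rel_linear_comp[OF T H(1)] H(2) by auto
next
  show "T (\<Sum>l<L. H l (W l)) - (\<Sum>(g, x)\<leftarrow>map (\<lambda>l. (T \<circ> H l, W l)) [0..<L]. g x) \<in> relsub sm"
    using rel_linear_sum_diff[OF T, where z = "\<lambda>l. H l (W l)" and A = "{..<L}"]
    by (simp add: interv_sum_list_conv_sum_set_nat atLeast0LessThan)
qed

lemma represents_exists:
  fixes sm :: "'b::ring_1 \<Rightarrow> 'm::ab_group_add \<Rightarrow> 'm"
  assumes sm: "lmod sm" and gen: "generates_sigma sm" and c: "c \<in> kerev sm"
  obtains R where "represents sm c R"
proof -
  obtain n :: nat and \<phi> k m where \<phi>: "\<And>i. i < n \<Longrightarrow> \<phi> i \<in> dualM sm"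
    and c_eq: "c = (\<Sum>i<n. zscale (k i) (delta (m i, \<phi> i)))"
    using freeT_indexed_expansion[OF kerev_freeT[OF c]] by blast
  define T where "T z = (\<Sum>i<n. zscale (k i) (delta (z i, \<phi> i)))" for z :: "nat \<Rightarrow> 'm"
  define \<Phi> where "\<Phi> z = (\<Sum>i<n. of_int (k i) * \<phi> i (z i))" for z :: "nat \<Rightarrow> 'm"
  have T: "rel_linear sm (vsm sm) T"
    unfolding T_def by (intro rel_linear_sum rel_linear_zscale_delta \<phi>) simp
  have evM_T: "evM (T z) = \<Phi> z" for z
    unfolding T_def \<Phi>_def
    by (subst sum_additive_on(1)[where S = finsupp, OF evM_add])
      (auto simp: evM_zscale evM_delta eval_pair_def)
  have \<Phi>_add: "\<Phi> (u + v) = \<Phi> u + \<Phi> v" for u v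
  proof -
    have "\<Phi> (u + v) = (\<Sum>i<n. of_int (k i) * \<phi> i (u i) + of_int (k i) * \<phi> i (v i))"
      unfolding \<Phi>_def by (intro sum.cong) (simp_all add: dualM_add[OF \<phi>] distrib_left)
    then show ?thesis by (simp add: \<Phi>_def sum.distrib)
  qed
  have \<Phi>_vsm: "\<Phi> (vsm sm b u) = b * \<Phi> u" for b u
    unfolding \<Phi>_def using \<phi>
    by (simp add: vsm_def dualM_scalar sum_distrib_left mult.assoc mult_of_int_commute)
  define m' where "m' i = (if i < n then m i else 0)" for i
  have c_eq': "c = T m'" unfolding c_eq T_def m'_def by simp
  then have "\<Phi> m' = 0" using c evM_T[of m'] by (auto simp: kerev_def)
  then obtain L :: nat and H W where H: "\<And>l. l < L \<Longrightarrow> blin sm (vsm sm) (H l)"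
    and HV: "\<And>l y. l < L \<Longrightarrow> \<Phi> (H l y) = 0" and m'_eq: "m' = (\<Sum>l<L. H l (W l))"
    using generator_decomposition[OF sm gen, of "{z. \<Phi> z = 0}" m' n] \<Phi>_add[of 0 0]
    by (auto simp: \<Phi>_add \<Phi>_vsm m'_def)
  have "T (H l y) \<in> kerev sm" if "l < L" for l y
    using rel_linear_freeT[OF T] evM_T HV[OF that] by (simp add: kerev_def)
  then have "represents sm c (map (\<lambda>l. (T \<circ> H l, W l)) [0..<L])"
    unfolding c_eq' m'_eq by (intro represents_decomposition T H)
  then show ?thesis by (rule that)
qed

lemma rel_linear_relsub_decomposition:
  fixes sm :: "'b::ring_1 \<Rightarrow> 'm::ab_group_add \<Rightarrow> 'm"
  assumes sm: "lmod sm" and gen: "generates_sigma sm"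
    and G: "\<And>j. j < n \<Longrightarrow> rel_linear sm sm (G j)"
    and X: "(\<Sum>j<n. G j (X j)) \<in> relsub sm"
  obtains L :: nat and H W where "\<And>l. l < L \<Longrightarrow> blin sm (vsm sm) (H l)"
    and "\<And>l y. l < L \<Longrightarrow> (\<Sum>j<n. G j (H l y j)) \<in> relsub sm"
    and "\<And>j. j < n \<Longrightarrow> X j = (\<Sum>l<L. H l (W l) j)"
proof -
  define \<Psi> where "\<Psi> z = (\<Sum>j<n. G j (z j))" for z :: "nat \<Rightarrow> 'm"
  have "rel_linear sm (vsm sm) (\<lambda>z. \<Sum>j<n. (G j \<circ> (\<lambda>z. z j)) z)"
    by (intro rel_linear_sum rel_linear_comp[OF G blin_component_vsm]) simp
  then have \<Psi>: "rel_linear sm (vsm sm) \<Psi>" by (simp add: \<Psi>_def[abs_def] o_def)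
  define X' where "X' j = (if j < n then X j else 0)" for j
  have "\<Psi> X' = (\<Sum>j<n. G j (X j))" by (simp add: \<Psi>_def X'_def)
  then obtain L :: nat and H W where H: "\<And>l. l < L \<Longrightarrow> blin sm (vsm sm) (H l)"
    and HV: "\<And>l y. l < L \<Longrightarrow> \<Psi> (H l y) \<in> relsub sm" and X'_eq: "X' = (\<Sum>l<L. H l (W l))"
    using generator_decomposition[OF sm gen, of "{z. \<Psi> z \<in> relsub sm}" X' n]
      rel_linear_zero[OF \<Psi>] rel_linear_relsub_closed[OF sm \<Psi>] X
    by (auto simp: X'_def)
  have "X j = (\<Sum>l<L. H l (W l) j)" if "j < n" for j
    using that fun_cong[OF X'_eq, of j] by (simp add: X'_def sum_fun_apply)
  with H HV show ?thesis by (intro that) (auto simp: \<Psi>_def)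
qed

section \<open>Lifting bimodule maps on the kernel of the evaluation\<close>

locale kernel_lifting =
  fixes sm :: "'b::ring_1 \<Rightarrow> 'm::ab_group_add \<Rightarrow> 'm"
    and lY :: "'b \<Rightarrow> 'y::ab_group_add \<Rightarrow> 'y" and rY :: "'y \<Rightarrow> 'b \<Rightarrow> 'y"
    and lZ :: "'b \<Rightarrow> 'z::ab_group_add \<Rightarrow> 'z" and rZ :: "'z \<Rightarrow> 'b \<Rightarrow> 'z"
    and f :: "'y \<Rightarrow> 'z" and p :: "('m \<times> ('m \<Rightarrow> 'b) \<Rightarrow> int) \<Rightarrow> 'z"
    and r :: "('m \<Rightarrow> 'z) \<Rightarrow> ('m \<Rightarrow> 'y)"
  assumes lmod: "lmod sm" and generates: "generates_sigma sm"
    and bimod_Y: "bimod lY rY" and bimod_Z: "bimod lZ rZ"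
    and f_bimap: "bimap lY rY lZ rZ f"
    and r_blin: "\<And>h. blin sm lZ h \<Longrightarrow> blin sm lY (r h)"
    and r_add: "\<And>h h'. blin sm lZ h \<Longrightarrow> blin sm lZ h' \<Longrightarrow> r (h + h') = r h + r h'"
    and r_comp_EndB: "\<And>h a. blin sm lZ h \<Longrightarrow> a \<in> EndB sm \<Longrightarrow> r (h \<circ> a) = r h \<circ> a"
    and r_right: "\<And>h b. blin sm lZ h \<Longrightarrow> r (\<lambda>m. rZ (h m) b) = (\<lambda>m. rY (r h m) b)"
    and r_section: "\<And>h. blin sm lZ h \<Longrightarrow> f \<circ> r h = h"
    and p_kermap: "kermap sm lZ rZ p"
begin

lemma p_relsub: "c \<in> relsub sm \<Longrightarrow> p c = 0"
  using p_kermap by (simp add: kermap_def)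

lemma p_add: "c \<in> kerev sm \<Longrightarrow> d \<in> kerev sm \<Longrightarrow> p (c + d) = p c + p d"
  using p_kermap by (simp add: kermap_def)

lemma p_tlact: "c \<in> kerev sm \<Longrightarrow> p (tlact sm b c) = lZ b (p c)"
  using p_kermap by (simp add: kermap_def)

lemma p_tract: "c \<in> kerev sm \<Longrightarrow> p (tract c b) = rZ (p c) b"
  using p_kermap by (simp add: kermap_def)

lemma p_eq_if_diff_relsub:
  assumes "c \<in> kerev sm" "d \<in> kerev sm" "c - d \<in> relsub sm"
  shows "p c = p d"
  using p_add[OF assms(2) kerev_diff[OF assms(1,2)]] p_relsub[OF assms(3)] by simp

lemma p_sum: "(\<And>i. i \<in> A \<Longrightarrow> c i \<in> kerev sm) \<Longrightarrow> p (\<Sum>i\<in>A. c i) = (\<Sum>i\<in>A. p (c i))"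
  by (rule sum_additive_on(1)[where S = "kerev sm", OF p_add]) (auto intro: kerev_zero kerev_add)

lemma p_sum_list:
  "(\<And>z. z \<in> set zs \<Longrightarrow> c z \<in> kerev sm) \<Longrightarrow> p (\<Sum>z\<leftarrow>zs. c z) = (\<Sum>z\<leftarrow>zs. p (c z))"
  by (rule sum_list_additive_on(1)[where S = "kerev sm", OF p_add]) (auto intro: kerev_zero kerev_add)

lemma blin_p_comp:
  assumes g: "rel_linear sm sm g" and ker: "\<And>y. g y \<in> kerev sm"
  shows "blin sm lZ (p \<circ> g)"
  unfolding blin_def
proof (intro conjI allI)
  fix x y b
  have "p (g (x + y)) = p (g x + g y)"
    using rel_linear_add[OF g] by (intro p_eq_if_diff_relsub) (simp_all add: ker kerev_add diff_diff_eq)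
  then show "(p \<circ> g) (x + y) = (p \<circ> g) x + (p \<circ> g) y" by (simp add: p_add ker)
  have "p (g (sm b x)) = p (tlact sm b (g x))"
    using rel_linear_scalar[OF g] by (intro p_eq_if_diff_relsub) (simp_all add: ker tlact_kerev)
  then show "(p \<circ> g) (sm b x) = lZ b ((p \<circ> g) x)" by (simp add: p_tlact ker)
qed

lemma blin_zero: "blin sm lZ 0"
  using bimod_Z by (simp add: blin_def bimod_def lmod_scalar_zero)

lemma blin_add: "blin sm lZ h \<Longrightarrow> blin sm lZ h' \<Longrightarrow> blin sm lZ (h + h')"
  using bimod_Z by (simp add: blin_def bimod_def lmod_def algebra_simps)

lemma r_sum:
  "(\<And>i. i \<in> A \<Longrightarrow> blin sm lZ (h i)) \<Longrightarrow> r (\<Sum>i\<in>A. h i) = (\<Sum>i\<in>A. r (h i))"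
  by (rule sum_additive_on(1)[where S = "{h. blin sm lZ h}", OF r_add])
    (auto intro: blin_zero blin_add)

lemma r_zero: "r 0 = 0"
  using r_sum[of "{}"] by simp

lemma lift_indexed_eq_0:
  fixes n :: nat
  assumes G: "\<And>j. j < n \<Longrightarrow> rel_linear sm sm (G j)" and ker: "\<And>j y. j < n \<Longrightarrow> G j y \<in> kerev sm"
    and X: "(\<Sum>j<n. G j (X j)) \<in> relsub sm"
  shows "(\<Sum>j<n. r (p \<circ> G j) (X j)) = 0"
proof -
  obtain L :: nat and H W where H: "\<And>l. l < L \<Longrightarrow> blin sm (vsm sm) (H l)"
    and HV: "\<And>l y. l < L \<Longrightarrow> (\<Sum>j<n. G j (H l y j)) \<in> relsub sm"
    and X_eq: "\<And>j. j < n \<Longrightarrow> X j = (\<Sum>l<L. H l (W l) j)"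
    using rel_linear_relsub_decomposition[OF lmod generates G X] by blast
  define a where "a j l y = H l y j" for j l y
  have a: "a j l \<in> EndB sm" if "l < L" for j l
    using blin_vsm_component[OF H[OF that]] by (simp add: a_def[abs_def])
  have pG: "blin sm lZ (p \<circ> G j)" if "j < n" for j
    using that by (intro blin_p_comp G ker)
  have cancel: "(\<Sum>j<n. p \<circ> G j \<circ> a j l) = 0" if "l < L" for l
  proof
    fix y
    have "(\<Sum>j<n. p \<circ> G j \<circ> a j l) y = (\<Sum>j<n. p (G j (H l y j)))"
      by (simp add: sum_fun_apply a_def)
    also have "\<dots> = p (\<Sum>j<n. G j (H l y j))" by (rule p_sum[symmetric]) (simp add: ker)
    also have "\<dots> = 0" by (rule p_relsub[OF HV[OF that]])
    finally show "(\<Sum>j<n. p \<circ> G j \<circ> a j l) y = 0 y" by simp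
  qed
  have "(\<Sum>j<n. r (p \<circ> G j) (X j)) = (\<Sum>j<n. \<Sum>l<L. r (p \<circ> G j) (a j l (W l)))"
    by (intro sum.cong refl)
      (simp add: X_eq a_def blin_sum[OF r_blin[OF pG]])
  also have "\<dots> = (\<Sum>j<n. \<Sum>l<L. r (p \<circ> G j \<circ> a j l) (W l))"
    by (intro sum.cong refl) (simp add: r_comp_EndB pG a)
  also have "\<dots> = (\<Sum>l<L. r (\<Sum>j<n. p \<circ> G j \<circ> a j l) (W l))"
  proof (subst sum.swap, intro sum.cong refl)
    fix l assume "l \<in> {..<L}"
    then have "r (\<Sum>j<n. p \<circ> G j \<circ> a j l) = (\<Sum>j<n. r (p \<circ> G j \<circ> a j l))"
      by (intro r_sum) (simp add: blin_comp_EndB pG a)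
    then show "(\<Sum>j<n. r (p \<circ> G j \<circ> a j l) (W l)) = r (\<Sum>j<n. p \<circ> G j \<circ> a j l) (W l)"
      by (simp add: sum_fun_apply)
  qed
  also have "\<dots> = 0" by (simp add: cancel r_zero)
  finally show ?thesis .
qed

definition lift_sum :: "(('m \<Rightarrow> ('m \<times> ('m \<Rightarrow> 'b) \<Rightarrow> int)) \<times> 'm) list \<Rightarrow> 'y" where
  "lift_sum R = (\<Sum>(g, x)\<leftarrow>R. r (p \<circ> g) x)"

definition lift :: "('m \<times> ('m \<Rightarrow> 'b) \<Rightarrow> int) \<Rightarrow> 'y" where
  "lift c = lift_sum (SOME R. represents sm c R)"

lemma blin_lift_component:
  "represents sm c R \<Longrightarrow> (g, x) \<in> set R \<Longrightarrow> blin sm lY (r (p \<circ> g))"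
  by (intro r_blin blin_p_comp representsD)

lemma lift_sum_eq_0:
  assumes R: "represents sm 0 R"
  shows "lift_sum R = 0"
proof -
  define G where "G j = fst (R ! j)" for j
  define X where "X j = snd (R ! j)" for j
  have mem: "(G j, X j) \<in> set R" if "j < length R" for j
    using that by (simp add: G_def X_def)
  have "(\<Sum>j<length R. G j (X j)) \<in> relsub sm"
    using relsub_uminus[OF representsD(1)[OF R]]
    by (simp add: sum_list_eq_sum_nth G_def X_def split_def)
  then have "(\<Sum>j<length R. r (p \<circ> G j) (X j)) = 0"
    using representsD(2,3)[OF R mem] by (intro lift_indexed_eq_0)
  then show ?thesis by (simp add: lift_sum_def sum_list_eq_sum_nth G_def X_def split_def)
qed

lemma lift_sum_append: "lift_sum (R @ R') = lift_sum R + lift_sum R'"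
  by (simp add: lift_sum_def)

lemma lift_sum_uminus:
  assumes R: "represents sm c R"
  shows "lift_sum (map (\<lambda>(g, x). (g, - x)) R) = - lift_sum R"
proof -
  have "r (p \<circ> g) (- x) = - r (p \<circ> g) x" if "(g, x) \<in> set R" for g x
    using blin_lift_component[OF R that] by (simp add: blin_def additive_diff)
  then show ?thesis
    by (simp add: lift_sum_def o_def split_def uminus_sum_list_map case_prod_beta cong: map_cong)
qed

lemma lift_sum_unique:
  assumes "represents sm c R" and "represents sm c R'"
  shows "lift_sum R = lift_sum R'"
proof -
  have "represents sm (c + - c) (R @ map (\<lambda>(g, x). (g, - x)) R')"
    by (intro represents_append represents_uminus assms)
  then have "lift_sum (R @ map (\<lambda>(g, x). (g, - x)) R') = 0" by (intro lift_sum_eq_0) simp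
  then show ?thesis by (simp add: lift_sum_append lift_sum_uminus[OF assms(2)])
qed

lemma lift_eq_lift_sum: "represents sm c R \<Longrightarrow> lift c = lift_sum R"
  unfolding lift_def by (rule lift_sum_unique) (rule someI)

lemma lift_relsub: "c \<in> relsub sm \<Longrightarrow> lift c = 0"
  by (simp add: lift_eq_lift_sum[OF represents_Nil] lift_sum_def)

lemma lift_add:
  assumes "c \<in> kerev sm" "d \<in> kerev sm"
  shows "lift (c + d) = lift c + lift d"
proof -
  obtain R R' where R: "represents sm c R" and R': "represents sm d R'"
    using represents_exists[OF lmod generates] assms by metis
  then show ?thesis
    by (simp add: lift_eq_lift_sum[OF represents_append[OF R R']] lift_eq_lift_sum lift_sum_append)
qed

lemma lift_tlact:
  assumes c: "c \<in> kerev sm"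
  shows "lift (tlact sm b c) = lY b (lift c)"
proof -
  obtain R where R: "represents sm c R" using represents_exists[OF lmod generates c] by metis
  have lY: "lY b (u + v) = lY b u + lY b v" for u v
    using bimod_Y by (simp add: bimod_def lmod_def)
  have "lift (tlact sm b c) = (\<Sum>(g, x)\<leftarrow>R. r (p \<circ> g) (sm b x))"
    by (simp add: lift_eq_lift_sum[OF represents_tlact[OF lmod R kerev_finsupp[OF c]]]
        lift_sum_def o_def split_def)
  also have "\<dots> = (\<Sum>(g, x)\<leftarrow>R. lY b (r (p \<circ> g) x))"
    using blin_lift_component[OF R] by (intro arg_cong[of _ _ sum_list] map_cong) (auto simp: blin_def)
  also have "\<dots> = lY b (lift c)"
    by (simp add: lift_eq_lift_sum[OF R] lift_sum_def sum_list_additive[of "lY b", OF lY] split_def)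
  finally show ?thesis .
qed

lemma lift_tract:
  assumes c: "c \<in> kerev sm"
  shows "lift (tract c b) = rY (lift c) b"
proof -
  obtain R where R: "represents sm c R" using represents_exists[OF lmod generates c] by metis
  have rY: "rY (u + v) b = rY u b + rY v b" for u v
    using bimod_Y by (simp add: bimod_def rmod_def)
  have "lift (tract c b) = (\<Sum>(g, x)\<leftarrow>R. r (p \<circ> (\<lambda>y. tract (g y) b)) x)"
    by (simp add: lift_eq_lift_sum[OF represents_tract[OF R kerev_finsupp[OF c]]]
        lift_sum_def o_def split_def)
  also have "\<dots> = (\<Sum>(g, x)\<leftarrow>R. rY (r (p \<circ> g) x) b)"
  proof (intro arg_cong[of _ _ sum_list] map_cong refl, clarify)
    fix g x assume gx: "(g, x) \<in> set R"
    have "p \<circ> (\<lambda>y. tract (g y) b) = (\<lambda>y. rZ ((p \<circ> g) y) b)"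
      using representsD(3)[OF R gx] by (simp add: fun_eq_iff p_tract)
    then show "r (p \<circ> (\<lambda>y. tract (g y) b)) x = rY (r (p \<circ> g) x) b"
      using r_right[OF blin_p_comp[OF representsD(2,3)[OF R gx]]] by simp
  qed
  also have "\<dots> = rY (lift c) b"
    by (simp add: lift_eq_lift_sum[OF R] lift_sum_def sum_list_additive[of "\<lambda>y. rY y b", OF rY]
        split_def)
  finally show ?thesis .
qed

lemma lift_kermap: "kermap sm lY rY lift"
  by (simp add: kermap_def lift_relsub lift_add lift_tlact lift_tract)

lemma f_lift:
  assumes c: "c \<in> kerev sm"
  shows "f (lift c) = p c"
proof -
  obtain R where R: "represents sm c R" using represents_exists[OF lmod generates c] by metis
  have f_add: "f (u + v) = f u + f v" for u v
    using f_bimap by (simp add: bimap_def)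
  have "f (lift c) = (\<Sum>(g, x)\<leftarrow>R. f (r (p \<circ> g) x))"
    by (simp add: lift_eq_lift_sum[OF R] lift_sum_def sum_list_additive[of f, OF f_add] split_def)
  also have "\<dots> = (\<Sum>(g, x)\<leftarrow>R. p (g x))"
  proof (intro arg_cong[of _ _ sum_list] map_cong refl, clarify)
    fix g x assume gx: "(g, x) \<in> set R"
    show "f (r (p \<circ> g) x) = p (g x)"
      using r_section[OF blin_p_comp[OF representsD(2,3)[OF R gx]]] by (simp add: fun_eq_iff)
  qed
  also have "\<dots> = p (\<Sum>(g, x)\<leftarrow>R. g x)"
    using representsD(3)[OF R] by (subst p_sum_list) (auto simp: split_def)
  also have "\<dots> = p c"
    using relsub_uminus[OF representsD(1)[OF R]] representsD(3)[OF R] c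
    by (intro p_eq_if_diff_relsub) (auto simp: split_def intro: kerev_sum_list)
  finally show ?thesis .
qed

end

theorem mainTheorem11:
  fixes sm :: "'b::ring_1 \<Rightarrow> 'm::ab_group_add \<Rightarrow> 'm"
    and lY :: "'b \<Rightarrow> 'y::ab_group_add \<Rightarrow> 'y" and rY :: "'y \<Rightarrow> 'b \<Rightarrow> 'y"
    and lZ :: "'b \<Rightarrow> 'z::ab_group_add \<Rightarrow> 'z" and rZ :: "'z \<Rightarrow> 'b \<Rightarrow> 'z"
  assumes "lmod sm"
    and "generates_sigma sm"
  shows "formally_smooth sm lY rY lZ rZ"
  unfolding formally_smooth_def
proof (intro allI impI)
  fix f :: "'y \<Rightarrow> 'z" and p
  assume "bimod lY rY" "bimod lZ rZ" "E_class sm lY rY lZ rZ f" "kermap sm lZ rZ p"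
  then obtain r where "kernel_lifting sm lY rY lZ rZ f p r"
    using assms unfolding E_class_def kernel_lifting_def by blast
  then interpret kernel_lifting sm lY rY lZ rZ f p r .
  show "\<exists>q. kermap sm lY rY q \<and> (\<forall>c\<in>kerev sm. f (q c) = p c)"
    using lift_kermap f_lift by blast
qed

end
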